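(* Let $q>0$ be a real number and let ${\mathbb O}({\rm SP}_q^{2|1})$ be the complex superalgebra generated by the even elements $x_+, x_-$ and the odd element $\theta$ subject to the relations $$x_+\theta = q\,\theta x_+,\quad \theta x_- = q\, x_-\theta,\quad x_-x_+ = q^{-2}x_+x_-,\quad \theta^2 = q^{1/2}(q-1)\,x_-x_+ .$$ Then there is a $\mathbb Z_2$-graded (conjugate-linear) involution $\star$ on ${\mathbb O}({\rm SP}_q^{2|1})$ determined by $$x_+^\star = q^{1/2}\,x_-,\qquad \theta^\star = {\bf i}\,\theta,\qquad x_-^\star = q^{-1/2}\,x_+ ,$$ where ${\bf i}=\sqrt{-1}$, so that ${\mathbb O}({\rm SP}_q^{2|1})$ becomes a super $\star$-algebra.
   Context: The grade of a homogeneous element $a$ is denoted $\tau(a)\in\{0,1\}$ ($x_\pm$ have grade $0$, $\theta$ has grade $1$). A $\mathbb Z_2$-graded involution (superinvolution) on an associative superalgebra ${\mathbb A}$ is a grade-preserving map $\star:{\mathbb A}\to{\mathbb A}$ with $(ab)^\star=(-1)^{\tau(a)\tau(b)}b^\star a^\star$ and $(a^\star)^\star=a$ for homogeneous $a,b$; the pair $({\mathbb A},\star)$ is then called a super $\star$-algebra. *)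

theory Defs
  imports Complex_Main
begin

datatype gen = Xp | Xm | Th

text \<open>Elements of the free associative algebra: coefficient functions on words
  (only finitely supported ones are genuine elements, see fsupp).\<close>
type_synonym fa = "gen list \<Rightarrow> complex"

definition fsupp :: "fa \<Rightarrow> bool" where
  "fsupp a \<longleftrightarrow> finite {w. a w \<noteq> 0}"

definition fadd :: "fa \<Rightarrow> fa \<Rightarrow> fa" where
  "fadd a b = (\<lambda>w. a w + b w)"

definition fsub :: "fa \<Rightarrow> fa \<Rightarrow> fa" where
  "fsub a b = (\<lambda>w. a w - b w)"

definition fscal :: "complex \<Rightarrow> fa \<Rightarrow> fa" where
  "fscal c a = (\<lambda>w. c * a w)"

definition fzero :: fa where
  "fzero = (\<lambda>w. 0)"

definition fword :: "gen list \<Rightarrow> fa" where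
  "fword u = (\<lambda>w. if w = u then 1 else 0)"

definition fmul :: "fa \<Rightarrow> fa \<Rightarrow> fa" where
  "fmul a b = (\<lambda>w. \<Sum>(u, v) \<in> {(u, v). u @ v = w}. a u * b v)"

definition rels :: "real \<Rightarrow> fa set" where
  "rels q = {
     fsub (fword [Xp, Th]) (fscal (complex_of_real q) (fword [Th, Xp])),
     fsub (fword [Th, Xm]) (fscal (complex_of_real q) (fword [Xm, Th])),
     fsub (fword [Xm, Xp]) (fscal (complex_of_real (1 / q ^ 2)) (fword [Xp, Xm])),
     fsub (fword [Th, Th]) (fscal (complex_of_real (sqrt q * (q - 1))) (fword [Xm, Xp]))}"

inductive_set idl :: "real \<Rightarrow> fa set" for q :: real where
  rel: "r \<in> rels q \<Longrightarrow> r \<in> idl q"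
| zero: "fzero \<in> idl q"
| add: "a \<in> idl q \<Longrightarrow> b \<in> idl q \<Longrightarrow> fadd a b \<in> idl q"
| scal: "a \<in> idl q \<Longrightarrow> fscal c a \<in> idl q"
| lmul: "a \<in> idl q \<Longrightarrow> fmul (fword u) a \<in> idl q"
| rmul: "a \<in> idl q \<Longrightarrow> fmul a (fword u) \<in> idl q"

text \<open>Congruence modulo the ideal = equality in the quotient algebra O(SP_q^{2|1}).\<close>
definition fcong :: "real \<Rightarrow> fa \<Rightarrow> fa \<Rightarrow> bool" where
  "fcong q a b \<longleftrightarrow> fsub a b \<in> idl q"

definition wdeg :: "gen list \<Rightarrow> nat" where
  "wdeg w = length (filter (\<lambda>g. g = Th) w) mod 2"

definition homog :: "nat \<Rightarrow> fa \<Rightarrow> bool" where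
  "homog d a \<longleftrightarrow> d < 2 \<and> fsupp a \<and> (\<forall>w. a w \<noteq> 0 \<longrightarrow> wdeg w = d)"

end

theory Submission
  imports Defs
begin

text \<open>On a word the involution reverses the order of the letters, exchanges \<open>x\<^sub>+\<close> and
  \<open>x\<^sub>-\<close>, and multiplies by the prescribed scalars \<open>c(x\<^sub>+) = sqrt q\<close>, \<open>c(\<theta>) = \<i>\<close>,
  \<open>c(x\<^sub>-) = 1 / sqrt q\<close> of its letters and by the Koszul sign \<open>(-1)^(k(k-1)/2)\<close> of reversing
  \<open>k\<close> odd letters; it is extended conjugate-linearly. This is a graded anti-automorphism of the
  free superalgebra, and it is involutive because \<open>c(x\<^sub>-) * cnj (c(x\<^sub>+)) = c(\<theta>) * cnj (c(\<theta>)) = 1\<close>.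
  It sends each defining relation to a scalar multiple of a defining relation. Moving a word
  with \<open>k\<close> odd letters across the involution multiplies the parity-\<open>d\<close> part of the other factor
  by \<open>(-1)^(k d)\<close>; this twist preserves the ideal because the relations are homogeneous, hence
  so does the involution.\<close>

fun swap_gen :: "gen \<Rightarrow> gen" where
  "swap_gen Xp = Xm" | "swap_gen Xm = Xp" | "swap_gen Th = Th"

definition star_word :: "gen list \<Rightarrow> gen list" where
  "star_word w = rev (map swap_gen w)"

definition theta_count :: "gen list \<Rightarrow> nat" where
  "theta_count w = length (filter (\<lambda>g. g = Th) w)"

fun reversal_sign :: "nat \<Rightarrow> complex" where
  "reversal_sign 0 = 1"
| "reversal_sign (Suc k) = (-1) ^ k * reversal_sign k"

fun gen_coeff :: "real \<Rightarrow> gen \<Rightarrow> complex" where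
  "gen_coeff q Xp = complex_of_real (sqrt q)"
| "gen_coeff q Th = \<i>"
| "gen_coeff q Xm = complex_of_real (1 / sqrt q)"

definition word_coeff :: "real \<Rightarrow> gen list \<Rightarrow> complex" where
  "word_coeff q w = reversal_sign (theta_count w) * prod_list (map (gen_coeff q) w)"

definition star :: "real \<Rightarrow> fa \<Rightarrow> fa" where
  "star q a = (\<lambda>w. word_coeff q (star_word w) * cnj (a (star_word w)))"

definition parity_twist :: "nat \<Rightarrow> fa \<Rightarrow> fa" where
  "parity_twist k a = (\<lambda>w. (-1) ^ (k * theta_count w) * a w)"

lemma swap_gen_swap_gen [simp]: "swap_gen (swap_gen g) = g"
  by (cases g) auto

lemma swap_gen_eq_Th_iff: "swap_gen g = Th \<longleftrightarrow> g = Th"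
  by (cases g) auto

lemma star_word_star_word [simp]: "star_word (star_word w) = w"
  by (simp add: star_word_def rev_map comp_def)

lemma star_word_append: "star_word (u @ v) = star_word v @ star_word u"
  by (simp add: star_word_def)

lemma theta_count_star_word [simp]: "theta_count (star_word w) = theta_count w"
  by (induction w) (auto simp: theta_count_def star_word_def swap_gen_eq_Th_iff)

lemma theta_count_append: "theta_count (u @ v) = theta_count u + theta_count v"
  by (simp add: theta_count_def)

lemma wdeg_eq_theta_count_mod_2: "wdeg w = theta_count w mod 2"
  by (simp add: wdeg_def theta_count_def)

lemma wdeg_star_word [simp]: "wdeg (star_word w) = wdeg w"
  by (simp add: wdeg_eq_theta_count_mod_2)

lemma reversal_sign_add:
  "reversal_sign (m + n) = (-1) ^ (m * n) * reversal_sign m * reversal_sign n"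
  by (induction n) (auto simp: power_add algebra_simps)

lemma reversal_sign_square: "reversal_sign k * reversal_sign k = 1"
  by (induction k) (auto simp: algebra_simps simp flip: power_add mult_2)

lemma cnj_reversal_sign [simp]: "cnj (reversal_sign k) = reversal_sign k"
  by (induction k) auto

lemma word_coeff_append:
  "word_coeff q (u @ v) = (-1) ^ (theta_count u * theta_count v) * word_coeff q u * word_coeff q v"
  by (simp add: word_coeff_def theta_count_append reversal_sign_add)

lemma gen_coeff_swap_gen_mult_cnj:
  "q \<noteq> 0 \<Longrightarrow> gen_coeff q (swap_gen g) * cnj (gen_coeff q g) = 1"
  by (cases g) (auto simp flip: of_real_mult)

lemma word_coeff_star_word_mult_cnj:
  assumes "q \<noteq> 0"
  shows "word_coeff q (star_word w) * cnj (word_coeff q w) = 1"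
proof -
  have "prod_list (map (gen_coeff q) (star_word w)) * cnj (prod_list (map (gen_coeff q) w)) = 1"
  proof (induction w)
    case (Cons g w)
    then show ?case
      using gen_coeff_swap_gen_mult_cnj[OF assms, of g]
      by (simp add: star_word_def algebra_simps)
  qed (simp add: star_word_def)
  then show ?thesis
    using reversal_sign_square[of "theta_count w"]
    by (simp add: word_coeff_def algebra_simps)
qed

lemma star_fword: "star q (fword u) = fscal (word_coeff q u) (fword (star_word u))"
  by (rule ext) (auto simp: star_def fscal_def fword_def)

lemma star_fword_apply: "star q (fword u) w = (if w = star_word u then word_coeff q u else 0)"
  unfolding star_fword by (auto simp: fscal_def fword_def)

lemma star_fadd: "star q (fadd a b) = fadd (star q a) (star q b)"
  by (rule ext) (simp add: star_def fadd_def algebra_simps)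

lemma star_fsub: "star q (fsub a b) = fsub (star q a) (star q b)"
  by (rule ext) (simp add: star_def fsub_def algebra_simps)

lemma star_fscal: "star q (fscal c a) = fscal (cnj c) (star q a)"
  by (rule ext) (simp add: star_def fscal_def algebra_simps)

lemma star_fzero: "star q fzero = fzero"
  by (rule ext) (simp add: star_def fzero_def)

lemma star_star: "q \<noteq> 0 \<Longrightarrow> star q (star q a) = a"
  by (rule ext) (simp add: star_def mult.assoc[symmetric] word_coeff_star_word_mult_cnj)

lemma fsupp_star: "fsupp a \<Longrightarrow> fsupp (star q a)"
proof -
  assume "fsupp a"
  then have "finite (star_word ` {w. a w \<noteq> 0})"
    by (simp add: fsupp_def)
  moreover have "{w. star q a w \<noteq> 0} \<subseteq> star_word ` {w. a w \<noteq> 0}"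
    by (auto simp: star_def intro: image_eqI[where x = "star_word _"])
  ultimately show ?thesis
    unfolding fsupp_def by (rule finite_subset[rotated])
qed

lemma star_fmul_apply:
  "star q (fmul a b) w =
    (\<Sum>(x, y) \<in> {(x, y). x @ y = w}.
      (-1) ^ (theta_count x * theta_count y) * star q b x * star q a y)"
proof -
  have "star q (fmul a b) w =
      (\<Sum>(u, v) \<in> {(u, v). u @ v = star_word w}.
        word_coeff q (star_word w) * cnj (a u) * cnj (b v))"
    by (simp add: star_def fmul_def sum_distrib_left case_prod_beta mult.assoc)
  also have "\<dots> = (\<Sum>(x, y) \<in> {(x, y). x @ y = w}.
      (-1) ^ (theta_count x * theta_count y) * star q b x * star q a y)"
  proof (rule sum.reindex_bij_witness[where i = "\<lambda>(u, v). (star_word v, star_word u)"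
                                        and j = "\<lambda>(x, y). (star_word y, star_word x)"])
    fix p assume "p \<in> {(u, v). u @ v = star_word w}"
    then obtain u v where p: "p = (u, v)" and uv: "star_word w = u @ v"
      by auto
    from uv have "w = star_word v @ star_word u"
      by (metis star_word_append star_word_star_word)
    then show "(\<lambda>(x, y). (star_word y, star_word x)) p \<in> {(x, y). x @ y = w}"
      and "(case (\<lambda>(x, y). (star_word y, star_word x)) p of (x, y) \<Rightarrow>
             (-1) ^ (theta_count x * theta_count y) * star q b x * star q a y)
           = (case p of (u, v) \<Rightarrow> word_coeff q (star_word w) * cnj (a u) * cnj (b v))"
      by (simp_all add: p uv star_def star_word_append word_coeff_append algebra_simps)
  qed (auto simp: star_word_append)
  finally show ?thesis .
qed

lemma star_fmul_fword_left:
  "star q (fmul (fword u) a) = fmul (parity_twist (theta_count u) (star q a)) (star q (fword u))"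
proof (rule ext)
  fix w
  show "star q (fmul (fword u) a) w =
      fmul (parity_twist (theta_count u) (star q a)) (star q (fword u)) w"
    unfolding star_fmul_apply unfolding fmul_def parity_twist_def
    by (rule sum.cong) (auto simp: star_fword_apply mult.commute)
qed

lemma star_fmul_fword_right:
  "star q (fmul a (fword u)) = fmul (star q (fword u)) (parity_twist (theta_count u) (star q a))"
proof (rule ext)
  fix w
  show "star q (fmul a (fword u)) w =
      fmul (star q (fword u)) (parity_twist (theta_count u) (star q a)) w"
    unfolding star_fmul_apply unfolding fmul_def parity_twist_def
    by (rule sum.cong) (auto simp: star_fword_apply mult.commute)
qed

lemma fmul_fscal_left: "fmul (fscal c a) b = fscal c (fmul a b)"
  by (rule ext) (simp add: fmul_def fscal_def sum_distrib_left case_prod_beta algebra_simps)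

lemma fmul_fscal_right: "fmul a (fscal c b) = fscal c (fmul a b)"
  by (rule ext) (simp add: fmul_def fscal_def sum_distrib_left case_prod_beta algebra_simps)

lemma parity_twist_fmul: "parity_twist k (fmul a b) = fmul (parity_twist k a) (parity_twist k b)"
  unfolding parity_twist_def fmul_def sum_distrib_left
  by (rule ext, rule sum.cong)
     (auto simp: theta_count_append power_add add_mult_distrib2 algebra_simps)

lemma parity_twist_fword:
  "parity_twist k (fword u) = fscal ((-1) ^ (k * theta_count u)) (fword u)"
  by (rule ext) (simp add: parity_twist_def fscal_def fword_def)

lemma rels_homogeneous_binomial:
  assumes "r \<in> rels q"
  obtains u v c where "r = fsub (fword u) (fscal c (fword v))"
    and "even (theta_count u) \<longleftrightarrow> even (theta_count v)"
  using assms unfolding rels_def by (auto simp: theta_count_def)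

lemma parity_twist_idl: "a \<in> idl q \<Longrightarrow> parity_twist k a \<in> idl q"
proof (induction rule: idl.induct)
  case (rel r)
  then obtain u v c where r: "r = fsub (fword u) (fscal c (fword v))"
    and parity: "even (theta_count u) \<longleftrightarrow> even (theta_count v)"
    by (rule rels_homogeneous_binomial)
  have "parity_twist k r = fscal ((-1) ^ (k * theta_count u)) r"
    using parity by (auto simp: r parity_twist_def fsub_def fscal_def fword_def minus_one_power_iff)
  then show ?case
    using idl.rel[OF rel] idl.scal by metis
next
  case zero
  have "parity_twist k fzero = fzero"
    by (rule ext) (simp add: parity_twist_def fzero_def)
  then show ?case
    using idl.zero by simp
next
  case (add a b)
  have "parity_twist k (fadd a b) = fadd (parity_twist k a) (parity_twist k b)"
    by (rule ext) (simp add: parity_twist_def fadd_def algebra_simps)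
  then show ?case
    using add idl.add by simp
next
  case (scal a c)
  have "parity_twist k (fscal c a) = fscal c (parity_twist k a)"
    by (rule ext) (simp add: parity_twist_def fscal_def algebra_simps)
  then show ?case
    using scal idl.scal by simp
next
  case (lmul a u)
  then show ?case
    by (simp add: parity_twist_fmul parity_twist_fword fmul_fscal_left idl.lmul idl.scal)
next
  case (rmul a u)
  then show ?case
    by (simp add: parity_twist_fmul parity_twist_fword fmul_fscal_right idl.rmul idl.scal)
qed

lemma star_rels:
  assumes "q \<noteq> 0" and "r \<in> rels q"
  shows "star q r \<in> idl q"
proof -
  define r1 where "r1 = fsub (fword [Xp, Th]) (fscal (complex_of_real q) (fword [Th, Xp]))"
  define r2 where "r2 = fsub (fword [Th, Xm]) (fscal (complex_of_real q) (fword [Xm, Th]))"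
  define r3 where "r3 = fsub (fword [Xm, Xp]) (fscal (complex_of_real (1 / q ^ 2)) (fword [Xp, Xm]))"
  define r4 where "r4 = fsub (fword [Th, Th])
                          (fscal (complex_of_real (sqrt q * (q - 1))) (fword [Xm, Xp]))"
  have rels: "rels q = {r1, r2, r3, r4}"
    by (simp add: rels_def r1_def r2_def r3_def r4_def)
  have relations: "r1 \<in> idl q" "r2 \<in> idl q" "r3 \<in> idl q" "r4 \<in> idl q"
    by (simp_all add: rels idl.rel)
  have sqrt_inverse: "complex_of_real (sqrt q) * complex_of_real (1 / sqrt q) = 1"
    using assms(1) by (simp flip: of_real_mult)
  note star_simps = word_coeff_def theta_count_def star_word_def fsub_def fscal_def fword_def
  have "star q r1 = fscal (complex_of_real (sqrt q) * \<i>) r2"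
    unfolding r1_def r2_def star_fsub star_fscal star_fword by (rule ext) (auto simp: star_simps)
  moreover have "star q r2 = fscal (complex_of_real (1 / sqrt q) * \<i>) r1"
    unfolding r1_def r2_def star_fsub star_fscal star_fword by (rule ext) (auto simp: star_simps)
  moreover have "star q r3 = r3"
    unfolding r3_def star_fsub star_fscal star_fword
    by (rule ext) (auto simp: star_simps sqrt_inverse assms(1) algebra_simps)
  moreover have "star q r4 = r4"
    unfolding r4_def star_fsub star_fscal star_fword
    by (rule ext) (auto simp: star_simps sqrt_inverse assms(1) numeral_2_eq_2 algebra_simps)
  ultimately show ?thesis
    using assms(2) relations idl.scal unfolding rels by auto
qed

lemma star_idl:
  assumes "q \<noteq> 0"
  shows "a \<in> idl q \<Longrightarrow> star q a \<in> idl q"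
proof (induction rule: idl.induct)
  case (rel r)
  then show ?case
    using star_rels[OF assms] by blast
next
  case zero
  then show ?case
    by (simp add: star_fzero idl.zero)
next
  case (add a b)
  then show ?case
    by (simp add: star_fadd idl.add)
next
  case (scal a c)
  then show ?case
    by (simp add: star_fscal idl.scal)
next
  case (lmul a u)
  then show ?case
    by (simp add: star_fmul_fword_left star_fword fmul_fscal_right idl.scal idl.rmul parity_twist_idl)
next
  case (rmul a u)
  then show ?case
    by (simp add: star_fmul_fword_right star_fword fmul_fscal_left idl.scal idl.lmul parity_twist_idl)
qed

lemma fcong_refl: "fcong q a a"
proof -
  have "fsub a a = fzero"
    by (rule ext) (simp add: fsub_def fzero_def)
  then show ?thesis
    by (simp add: fcong_def idl.zero)
qed

lemma fcong_star: "q \<noteq> 0 \<Longrightarrow> fcong q a b \<Longrightarrow> fcong q (star q a) (star q b)"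
  by (simp add: fcong_def star_idl flip: star_fsub)

lemma homog_star: "homog d a \<Longrightarrow> homog d (star q a)"
  unfolding homog_def by (simp add: fsupp_star) (auto simp: star_def)

lemma homog_parity: "homog d a \<Longrightarrow> a w \<noteq> 0 \<Longrightarrow> even (theta_count w) \<longleftrightarrow> even d"
  by (auto simp: homog_def wdeg_eq_theta_count_mod_2 even_iff_mod_2_eq_zero)

lemma star_fmul_homog:
  assumes "homog da a" and "homog db b"
  shows "star q (fmul a b) = fscal ((-1) ^ (da * db)) (fmul (star q b) (star q a))"
proof (rule ext)
  fix w
  have sign: "(-1) ^ (theta_count x * theta_count y) * star q b x * star q a y
      = (-1) ^ (da * db) * (star q b x * star q a y)" for x y
  proof (cases "star q b x = 0 \<or> star q a y = 0")
    case False
    then have "even (theta_count x) \<longleftrightarrow> even db" and "even (theta_count y) \<longleftrightarrow> even da"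
      using homog_parity homog_star assms by blast+
    then show ?thesis
      by (simp add: minus_one_power_iff)
  qed auto
  show "star q (fmul a b) w = fscal ((-1) ^ (da * db)) (fmul (star q b) (star q a)) w"
    unfolding star_fmul_apply unfolding fscal_def fmul_def sum_distrib_left
    by (rule sum.cong) (auto simp: sign)
qed

theorem proposition3p1:
  fixes q :: real
  assumes "q > 0"
  shows "\<exists>s :: fa \<Rightarrow> fa.
    (\<forall>a. fsupp a \<longrightarrow> fsupp (s a)) \<and>
    (\<forall>a b. fcong q a b \<longrightarrow> fcong q (s a) (s b)) \<and>
    (\<forall>a b. fsupp a \<longrightarrow> fsupp b \<longrightarrow> fcong q (s (fadd a b)) (fadd (s a) (s b))) \<and>
    (\<forall>c a. fsupp a \<longrightarrow> fcong q (s (fscal c a)) (fscal (cnj c) (s a))) \<and>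
    (\<forall>d a. homog d a \<longrightarrow> (\<exists>b. homog d b \<and> fcong q (s a) b)) \<and>
    (\<forall>da db a b. homog da a \<longrightarrow> homog db b \<longrightarrow>
        fcong q (s (fmul a b)) (fscal ((-1) ^ (da * db)) (fmul (s b) (s a)))) \<and>
    (\<forall>a. fsupp a \<longrightarrow> fcong q (s (s a)) a) \<and>
    fcong q (s (fword [Xp])) (fscal (complex_of_real (sqrt q)) (fword [Xm])) \<and>
    fcong q (s (fword [Th])) (fscal \<i> (fword [Th])) \<and>
    fcong q (s (fword [Xm])) (fscal (complex_of_real (1 / sqrt q)) (fword [Xp]))"
proof -
  have q: "q \<noteq> 0"
    using assms by simp
  have generators: "star q (fword [Xp]) = fscal (complex_of_real (sqrt q)) (fword [Xm])"
    "star q (fword [Th]) = fscal \<i> (fword [Th])"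
    "star q (fword [Xm]) = fscal (complex_of_real (1 / sqrt q)) (fword [Xp])"
    by (simp_all add: star_fword word_coeff_def theta_count_def star_word_def)
  have homog: "homog d a \<Longrightarrow> \<exists>b. homog d b \<and> fcong q (star q a) b" for d a
    using homog_star fcong_refl by blast
  show ?thesis
    by (intro exI[of _ "star q"] conjI allI impI)
       (simp_all add: fsupp_star fcong_star[OF q] star_fadd star_fscal star_fmul_homog star_star[OF q]
          generators homog fcong_refl)
qed

end
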